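(* Let $n\ge 2$ be an integer, let $A$ be a complex Banach algebra, and let $0<r<\frac{1}{2}$, $\theta\in[0,\infty)$ be real numbers. Suppose $f:A\to A$ satisfies $$\Big\|\mu f\Big(\frac{x+y}{2}\Big)+\mu f\Big(\frac{x-y}{2}\Big)-f(\mu x)+f(a^n)-\big(f(a)a^{n-1}+af(a)a^{n-2}+\cdots+a^{n-2}f(a)a+a^{n-1}f(a)\big)\Big\|\le \theta(\|x\|^r\|y\|^r+\|a\|^{2r})$$ for all $\mu\in\mathbb{T}$ and all $x,y,a\in A$. Then there exists a unique $n$-Jordan derivation $D:A\to A$ such that $$\|f(x)-D(x)\|\le \frac{3^r\theta}{2-2^r}\|x\|^{2r}$$ for all $x\in A$.
   Context: $\mathbb{T}=\{\mu\in\mathbb{C}:|\mu|=1\}$. For an integer $n\ge 2$, an $n$-Jordan derivation on an algebra $A$ is a linear map $D:A\to A$ such that $D(a^n)=D(a)a^{n-1}+aD(a)a^{n-2}+\cdots+a^{n-2}D(a)a+a^{n-1}D(a)$ for all $a\in A$. *)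

theory Defs
  imports "HOL-Analysis.Analysis"
begin

class complex_banach_algebra = real_normed_algebra + banach +
  fixes scaleC :: "complex \<Rightarrow> 'a \<Rightarrow> 'a"  (infixr "*\<^sub>C" 75)
  assumes scaleC_add_right: "c *\<^sub>C (x + y) = c *\<^sub>C x + c *\<^sub>C y"
    and scaleC_add_left: "(b + c) *\<^sub>C x = b *\<^sub>C x + c *\<^sub>C x"
    and scaleC_scaleC: "b *\<^sub>C (c *\<^sub>C x) = (b * c) *\<^sub>C x"
    and scaleC_one: "1 *\<^sub>C x = x"
    and scaleC_of_real: "complex_of_real t *\<^sub>C x = t *\<^sub>R x"
    and norm_scaleC: "norm (c *\<^sub>C x) = cmod c * norm x"
    and mult_scaleC_left: "(c *\<^sub>C x) * y = c *\<^sub>C (x * y)"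
    and mult_scaleC_right: "x * (c *\<^sub>C y) = c *\<^sub>C (x * y)"

text \<open>Positive powers in a (possibly non-unital) algebra: spow a k = a^(k+1).\<close>
fun spow :: "'a::semigroup_mult \<Rightarrow> nat \<Rightarrow> 'a" where
  "spow a 0 = a"
| "spow a (Suc k) = a * spow a k"

text \<open>For n \<ge> 2: D(a)a^(n-1) + a D(a) a^(n-2) + ... + a^(n-2) D(a) a + a^(n-1) D(a).\<close>
definition jordan_sum :: "nat \<Rightarrow> ('a::{semigroup_mult,comm_monoid_add} \<Rightarrow> 'a) \<Rightarrow> 'a \<Rightarrow> 'a" where
  "jordan_sum n D a =
     D a * spow a (n - 2)
     + (\<Sum>k\<in>{1..n-2}. spow a (k - 1) * D a * spow a (n - 2 - k))
     + spow a (n - 2) * D a"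

definition n_jordan_derivation :: "nat \<Rightarrow> ('a::complex_banach_algebra \<Rightarrow> 'a) \<Rightarrow> bool" where
  "n_jordan_derivation n D \<longleftrightarrow>
     (\<forall>x y. D (x + y) = D x + D y) \<and> (\<forall>c x. D (c *\<^sub>C x) = c *\<^sub>C D x) \<and>
     (\<forall>a. D (spow a (n - 1)) = jordan_sum n D a)"

end

theory Submission
  imports Defs
begin

text \<open>The control function vanishes whenever one of its arguments is zero, so specialising
  the hypothesis makes it exact: \<open>f 0 = 0\<close>, \<open>f (\<mu> x) = \<mu> f x\<close> for unimodular \<open>\<mu>\<close>, and the
  Cauchy and Jordan defects of \<open>f\<close> are bounded by expressions homogeneous of degree
  \<open>2r < 1\<close>. Rescaling by \<open>2\<^sup>k\<close> multiplies each defect by \<open>2\<^sup>k\<close> (or \<open>2\<^sup>n\<^sup>k\<close>) but its bound only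
  by \<open>2\<^sup>2\<^sup>r\<^sup>k\<close>, so the defects vanish and \<open>f\<close> itself is an \<open>n\<close>-Jordan derivation. The same
  rescaling shows that two additive maps at distance \<open>O(\<parallel>x\<parallel>\<^sup>2\<^sup>r)\<close> coincide.\<close>

lemma spow_zero: "spow (0::'a::{semigroup_mult,mult_zero}) k = 0"
  by (induct k) auto

lemma spow_scaleR: "spow (t *\<^sub>R (a::'a::real_algebra)) k = t ^ Suc k *\<^sub>R spow a k"
  by (induct k) (auto simp: mult_scaleR_left mult_scaleR_right)

lemma jordan_sum_zero: "jordan_sum n g (0::'a::{semiring_0}) = 0"
  by (simp add: jordan_sum_def spow_zero)

lemma jordan_sum_scaleR:
  fixes g :: "'a::real_algebra \<Rightarrow> 'a"
  assumes n: "n \<ge> 2" and g: "g (t *\<^sub>R a) = t *\<^sub>R g a"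
  shows "jordan_sum n g (t *\<^sub>R a) = t ^ n *\<^sub>R jordan_sum n g a"
proof -
  have middle: "spow (t *\<^sub>R a) (k - 1) * g (t *\<^sub>R a) * spow (t *\<^sub>R a) (n - 2 - k)
      = t ^ n *\<^sub>R (spow a (k - 1) * g a * spow a (n - 2 - k))" if k: "k \<in> {1..n-2}" for k
  proof -
    have "Suc (k - 1) + (1 + Suc (n - 2 - k)) = n" using k n by auto
    then have powers: "t ^ Suc (k - 1) * (t * t ^ Suc (n - 2 - k)) = t ^ n"
      by (metis power_add power_one_right)
    show ?thesis
      by (simp add: spow_scaleR g mult_scaleR_left mult_scaleR_right flip: powers)
  qed
  have "(\<Sum>k\<in>{1..n-2}. spow (t *\<^sub>R a) (k - 1) * g (t *\<^sub>R a) * spow (t *\<^sub>R a) (n - 2 - k))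
      = (\<Sum>k\<in>{1..n-2}. t ^ n *\<^sub>R (spow a (k - 1) * g a * spow a (n - 2 - k)))"
    using middle by (rule sum.cong[OF refl])
  moreover have "t * t ^ (n - 1) = t ^ n" "Suc (n - 2) = n - 1"
    using n by (simp_all add: power_Suc[symmetric])
  ultimately show ?thesis
    unfolding jordan_sum_def
    by (simp add: spow_scaleR g mult_scaleR_left mult_scaleR_right scaleR_add_right
        scaleR_sum_right mult.commute)
qed

lemma eq_zero_if_geometric_bound:
  fixes N C b c :: real
  assumes "0 \<le> N" "0 < b" "b < c" "\<And>k. c ^ k * N \<le> C * b ^ k"
  shows "N = 0"
proof -
  have c: "c > 0" using assms by auto
  have "N \<le> C * (b / c) ^ k" for k
    using assms(4)[of k] c by (simp add: power_divide field_simps)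
  moreover have "(\<lambda>k. C * (b / c) ^ k) \<longlonglongrightarrow> C * 0"
    by (intro tendsto_mult tendsto_const LIMSEQ_power_zero) (use assms c in auto)
  ultimately have "N \<le> 0" by (simp add: LIMSEQ_le_const)
  with assms show ?thesis by auto
qed

lemma norm_scaleR_two_power_powr:
  "norm ((2 ^ k :: real) *\<^sub>R x) powr s = (2 powr s) ^ k * norm x powr s"
  by (simp add: powr_mult powr_realpow[symmetric] powr_powr mult.commute)

lemma two_powr_less_two: "(r::real) < 1 \<Longrightarrow> 2 powr r < 2"
  using powr_less_mono[of r 1 2] by simp

lemma scaleR_of_nat_if_additive:
  fixes x :: "'a::real_vector"
  assumes add: "\<And>x y. f (x + y) = f x + f y"
  shows "f (of_nat m *\<^sub>R x) = of_nat m *\<^sub>R (f x :: 'b::real_vector)"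
proof (induct m)
  case 0
  have "f 0 = f 0 + f 0" using add[of 0 0] by simp
  then show ?case by simp
next
  case (Suc m)
  have "f (of_nat (Suc m) *\<^sub>R x) = f (of_nat m *\<^sub>R x + x)" by (simp add: algebra_simps)
  then show ?case using Suc by (simp add: add algebra_simps)
qed

lemma scaleR_two_power_if_doubling:
  fixes f :: "'a::real_vector \<Rightarrow> 'b::real_vector"
  assumes "\<And>x. f (2 *\<^sub>R x) = 2 *\<^sub>R f x"
  shows "f ((2 ^ k :: real) *\<^sub>R x) = (2 ^ k :: real) *\<^sub>R f x"
proof (induct k)
  case (Suc k)
  have "f ((2 ^ Suc k :: real) *\<^sub>R x) = f (2 *\<^sub>R (2 ^ k :: real) *\<^sub>R x)"
    by (simp only: scaleR_scaleR power_Suc)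
  also have "\<dots> = 2 *\<^sub>R (2 ^ k :: real) *\<^sub>R f x" by (simp only: assms Suc)
  finally show ?case by (simp only: scaleR_scaleR power_Suc)
qed simp

lemma additive_if_cauchy_defect_le:
  fixes f :: "'a::real_normed_vector \<Rightarrow> 'b::real_normed_vector"
  assumes r: "r < 1/2"
    and double: "\<And>x. f (2 *\<^sub>R x) = 2 *\<^sub>R f x"
    and defect: "\<And>u v. norm (f u + f v - f (u + v)) \<le> \<theta> * (norm (u + v) powr r * norm (u - v) powr r)"
  shows "f (u + v) = f u + f v"
proof -
  let ?C = "\<theta> * (norm (u + v) powr r * norm (u - v) powr r)"
  have "norm (f u + f v - f (u + v)) = 0"
  proof (rule eq_zero_if_geometric_bound[where b = "2 powr (2 * r)" and c = 2 and C = ?C])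
    fix k :: nat
    let ?t = "2 ^ k :: real"
    have "?t * norm (f u + f v - f (u + v))
        = norm (f (?t *\<^sub>R u) + f (?t *\<^sub>R v) - f (?t *\<^sub>R u + ?t *\<^sub>R v))"
      by (simp add: scaleR_two_power_if_doubling[of f, OF double] scaleR_add_right[symmetric]
          scaleR_diff_right[symmetric])
    also have "\<dots> \<le> \<theta> * (norm (?t *\<^sub>R (u + v)) powr r * norm (?t *\<^sub>R (u - v)) powr r)"
      using defect[of "?t *\<^sub>R u" "?t *\<^sub>R v"] by (simp add: scaleR_add_right scaleR_diff_right)
    also have "\<dots> = ?C * (2 powr r * 2 powr r) ^ k"
      by (simp only: norm_scaleR_two_power_powr power_mult_distrib) (simp add: mult_ac)
    also have "2 powr r * 2 powr r = 2 powr (2 * r)"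
      by (metis mult_2 powr_add)
    finally show "2 ^ k * norm (f u + f v - f (u + v)) \<le> ?C * (2 powr (2 * r)) ^ k" .
  qed (use two_powr_less_two r in auto)
  then show ?thesis by simp
qed

lemma scaleR_if_additive_unimodular:
  fixes f :: "'a::complex_banach_algebra \<Rightarrow> 'b::complex_banach_algebra"
  assumes add: "\<And>x y. f (x + y) = f x + f y"
    and unimodular: "\<And>\<mu> x. cmod \<mu> = 1 \<Longrightarrow> f (\<mu> *\<^sub>C x) = \<mu> *\<^sub>C f x"
  shows "f (t *\<^sub>R x) = t *\<^sub>R f x"
proof -
  have small: "f (s *\<^sub>R x) = s *\<^sub>R f x" if "\<bar>s\<bar> \<le> 2" for s x
  proof -
    \<comment> \<open>\<open>s = \<mu> + cnj \<mu>\<close> for a unimodular \<open>\<mu>\<close> with real part \<open>s/2\<close>\<close>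
    define \<mu> where "\<mu> = Complex (s / 2) (sqrt (1 - (s / 2)\<^sup>2))"
    have "(s / 2)\<^sup>2 \<le> 1" using that by (simp add: abs_square_le_1)
    then have \<mu>: "cmod \<mu> = 1" "cmod (cnj \<mu>) = 1" unfolding \<mu>_def cmod_def by simp_all
    have s: "\<mu> + cnj \<mu> = complex_of_real s" unfolding \<mu>_def by (simp add: complex_eq_iff)
    have "f (s *\<^sub>R x) = f ((\<mu> + cnj \<mu>) *\<^sub>C x)" by (simp add: s scaleC_of_real)
    also have "\<dots> = (\<mu> + cnj \<mu>) *\<^sub>C f x" by (simp add: scaleC_add_left add unimodular \<mu>)
    finally show ?thesis by (simp add: s scaleC_of_real)
  qed
  define m where "m = nat \<lceil>\<bar>t\<bar>\<rceil> + 1"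
  have m: "real m > 0" unfolding m_def by (simp add: add_pos_nonneg)
  have "\<bar>t\<bar> \<le> real m" unfolding m_def by linarith
  with m have small_t: "\<bar>t / real m\<bar> \<le> 2" by (simp add: divide_le_eq)
  have "f (t *\<^sub>R x) = f (real m *\<^sub>R (t / real m) *\<^sub>R x)" using m by simp
  also have "\<dots> = real m *\<^sub>R (t / real m) *\<^sub>R f x"
    by (simp only: scaleR_of_nat_if_additive[OF add] small[OF small_t])
  also have "\<dots> = t *\<^sub>R f x" using m by simp
  finally show ?thesis .
qed

lemma scaleC_zero_left: "(0::complex) *\<^sub>C x = 0"
  using norm_scaleC[of 0 x] by simp

lemma scaleC_if_additive_unimodular:
  fixes f :: "'a::complex_banach_algebra \<Rightarrow> 'b::complex_banach_algebra"
  assumes add: "\<And>x y. f (x + y) = f x + f y"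
    and unimodular: "\<And>\<mu> x. cmod \<mu> = 1 \<Longrightarrow> f (\<mu> *\<^sub>C x) = \<mu> *\<^sub>C f x"
  shows "f (c *\<^sub>C x) = c *\<^sub>C f x"
proof (cases "c = 0")
  case True
  then show ?thesis
    using scaleR_if_additive_unimodular[OF assms, of 0 x] by (simp add: scaleC_zero_left)
next
  case False
  define u where "u = c / complex_of_real (cmod c)"
  have u: "cmod u = 1" unfolding u_def using False by (simp add: norm_divide)
  have c: "c = complex_of_real (cmod c) * u" unfolding u_def using False by simp
  have "f (c *\<^sub>C x) = f (cmod c *\<^sub>R u *\<^sub>C x)"
    by (subst c) (simp add: scaleC_scaleC[symmetric] scaleC_of_real)
  also have "\<dots> = cmod c *\<^sub>R u *\<^sub>C f x"
    by (simp add: scaleR_if_additive_unimodular[OF assms] unimodular[OF u])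
  also have "\<dots> = c *\<^sub>C f x"
    by (subst (2) c) (simp add: scaleC_scaleC[symmetric] scaleC_of_real)
  finally show ?thesis .
qed

lemma jordan_exact_if_defect_le:
  fixes f :: "'a::real_normed_algebra \<Rightarrow> 'a"
  assumes n: "n \<ge> 2" and r: "r < 1/2"
    and homogeneous: "\<And>t x. f (t *\<^sub>R x) = t *\<^sub>R f x"
    and defect: "\<And>a. norm (f (spow a (n - 1)) - jordan_sum n f a) \<le> \<theta> * norm a powr (2 * r)"
  shows "f (spow a (n - 1)) = jordan_sum n f a"
proof -
  let ?N = "norm (f (spow a (n - 1)) - jordan_sum n f a)"
  have "?N = 0"
  proof (rule eq_zero_if_geometric_bound[where b = "2 powr (2 * r)" and c = "2 ^ n"])
    fix k :: nat
    let ?t = "2 ^ k :: real"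
    have "Suc (n - 1) = n" using n by simp
    then have "(2 ^ n) ^ k * ?N = norm (f (spow (?t *\<^sub>R a) (n - 1)) - jordan_sum n f (?t *\<^sub>R a))"
      by (simp add: spow_scaleR homogeneous jordan_sum_scaleR[OF n] scaleR_diff_right[symmetric]
          power_mult[symmetric] mult.commute)
    also have "\<dots> \<le> \<theta> * norm a powr (2 * r) * (2 powr (2 * r)) ^ k"
      using defect[of "?t *\<^sub>R a"] by (simp only: norm_scaleR_two_power_powr mult_ac)
    finally show "(2 ^ n) ^ k * ?N \<le> \<theta> * norm a powr (2 * r) * (2 powr (2 * r)) ^ k" .
  next
    have "(2::real) ^ 1 \<le> 2 ^ n" using n by (intro power_increasing) auto
    then show "2 powr (2 * r) < 2 ^ n" using two_powr_less_two[of "2 * r"] r by simp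
  qed auto
  then show ?thesis by simp
qed

text \<open>No lower bound on \<open>r\<close> is needed: in Isabelle \<open>0 powr r = 0\<close> for every \<open>r\<close>.\<close>

lemma n_jordan_derivation_if_approximate:
  fixes f :: "'a::complex_banach_algebra \<Rightarrow> 'a"
  assumes n: "n \<ge> 2" and r: "r < 1/2"
    and approx: "\<And>\<mu> x y a. cmod \<mu> = 1 \<Longrightarrow>
      norm (\<mu> *\<^sub>C f ((1/2) *\<^sub>R (x + y)) + \<mu> *\<^sub>C f ((1/2) *\<^sub>R (x - y)) - f (\<mu> *\<^sub>C x)
            + f (spow a (n - 1)) - jordan_sum n f a)
      \<le> \<theta> * (norm x powr r * norm y powr r + norm a powr (2 * r))"
  shows "n_jordan_derivation n f"
proof -
  have "norm (f 0 + f 0) \<le> 0"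
    using approx[of 1 0 0 0] by (simp add: scaleC_one spow_zero jordan_sum_zero)
  then have "2 *\<^sub>R f 0 = 0" by (simp add: scaleR_2)
  then have f0: "f 0 = 0" by simp
  have halves: "f (\<mu> *\<^sub>C x) = \<mu> *\<^sub>C (f ((1/2) *\<^sub>R x) + f ((1/2) *\<^sub>R x))" if "cmod \<mu> = 1" for \<mu> x
    using approx[OF that, of x 0 0] f0 by (simp add: spow_zero jordan_sum_zero scaleC_add_right)
  have unimodular: "f (\<mu> *\<^sub>C x) = \<mu> *\<^sub>C f x" if "cmod \<mu> = 1" for \<mu> x
    using halves[OF that, of x] halves[of 1 x] by (simp add: scaleC_one)
  have double: "f (2 *\<^sub>R x) = 2 *\<^sub>R f x" for x
    using halves[of 1 "2 *\<^sub>R x"] by (simp add: scaleC_one scaleR_2)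
  have "norm (f u + f v - f (u + v)) \<le> \<theta> * (norm (u + v) powr r * norm (u - v) powr r)" for u v
  proof -
    have "(1/2) *\<^sub>R ((u + v) + (u - v)) = u" "(1/2) *\<^sub>R ((u + v) - (u - v)) = v"
      by (simp_all add: scaleR_2[symmetric] del: scaleR_2)
    then show ?thesis
      using approx[of 1 "u + v" "u - v" 0] f0 by (simp add: scaleC_one spow_zero jordan_sum_zero)
  qed
  then have add: "f (u + v) = f u + f v" for u v
    by (rule additive_if_cauchy_defect_le[where f = f, OF r double])
  have "norm (f (spow a (n - 1)) - jordan_sum n f a) \<le> \<theta> * norm a powr (2 * r)" for a
    using approx[of 1 0 0 a] f0 by (simp add: scaleC_one)
  then have "f (spow a (n - 1)) = jordan_sum n f a" for a
    using jordan_exact_if_defect_le[OF n r scaleR_if_additive_unimodular[OF add unimodular]] by blast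
  with add scaleC_if_additive_unimodular[OF add unimodular] show ?thesis
    unfolding n_jordan_derivation_def by blast
qed

lemma additive_eq_if_norm_diff_le_powr:
  fixes f g :: "'a::real_normed_vector \<Rightarrow> 'b::real_normed_vector"
  assumes "\<And>x y. f (x + y) = f x + f y" "\<And>x y. g (x + y) = g x + g y"
    and p: "p < 1" and close: "\<And>x. norm (f x - g x) \<le> K * norm x powr p"
  shows "f = g"
proof
  fix x
  have "norm (f x - g x) = 0"
  proof (rule eq_zero_if_geometric_bound[where b = "2 powr p" and c = 2 and C = "K * norm x powr p"])
    fix k :: nat
    let ?t = "2 ^ k :: real"
    have "2 ^ k * norm (f x - g x) = norm (f (?t *\<^sub>R x) - g (?t *\<^sub>R x))"
      using scaleR_of_nat_if_additive[OF assms(1), of "2 ^ k" x]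
        scaleR_of_nat_if_additive[OF assms(2), of "2 ^ k" x]
      by (simp add: scaleR_diff_right[symmetric])
    also have "\<dots> \<le> K * norm x powr p * (2 powr p) ^ k"
      using close[of "?t *\<^sub>R x"] by (simp only: norm_scaleR_two_power_powr mult_ac)
    finally show "2 ^ k * norm (f x - g x) \<le> K * norm x powr p * (2 powr p) ^ k" .
  qed (use two_powr_less_two p in auto)
  then show "f x = g x" by simp
qed

theorem corollary2p6:
  fixes f :: "'a::complex_banach_algebra \<Rightarrow> 'a" and n :: nat and r \<theta> :: real
  assumes "n \<ge> 2" and "0 < r" and "r < 1/2" and "\<theta> \<ge> 0"
    and "\<And>\<mu> x y a. cmod \<mu> = 1 \<Longrightarrow>
      norm (\<mu> *\<^sub>C f ((1/2) *\<^sub>R (x + y)) + \<mu> *\<^sub>C f ((1/2) *\<^sub>R (x - y)) - f (\<mu> *\<^sub>C x)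
            + f (spow a (n - 1)) - jordan_sum n f a)
      \<le> \<theta> * (norm x powr r * norm y powr r + norm a powr (2 * r))"
  shows "\<exists>!D. n_jordan_derivation n D \<and>
           (\<forall>x. norm (f x - D x) \<le> 3 powr r * \<theta> / (2 - 2 powr r) * norm x powr (2 * r))"
proof (rule ex1I[of _ f], intro conjI allI)
  let ?K = "3 powr r * \<theta> / (2 - 2 powr r)"
  have f: "n_jordan_derivation n f"
    using n_jordan_derivation_if_approximate assms(1,3,5) by blast
  then show "n_jordan_derivation n f" .
  have "2 powr r < 2" using two_powr_less_two[of r] assms(3) by simp
  with assms(4) show "norm (f x - f x) \<le> ?K * norm x powr (2 * r)" for x by simp
  fix D assume D: "n_jordan_derivation n D \<and> (\<forall>x. norm (f x - D x) \<le> ?K * norm x powr (2 * r))"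
  have "f = D"
  proof (rule additive_eq_if_norm_diff_le_powr[where p = "2 * r" and K = ?K])
    show "f (x + y) = f x + f y" "D (x + y) = D x + D y" for x y
      using f D unfolding n_jordan_derivation_def by blast+
    show "norm (f x - D x) \<le> ?K * norm x powr (2 * r)" for x
      using D by blast
  qed (use assms(3) in simp)
  then show "D = f" ..
qed

end
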